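(* Let $P(\theta,z)=(\theta+\alpha,p_\theta(z))$ be a fibred polynomial dynamics over an irrational rotation and let $\Gamma$ be an attracting invariant multi-curve for $P$. Then its basin of attraction $$\mathcal{A}(\Gamma)=\{(\theta,z)\in\mathbb{T}^1\times\mathbb{C}:\ \operatorname{dist}(P^k(\theta,z),\Gamma)\to0 \text{ as } k\to\infty\}$$ is an open subset of $\mathbb{T}^1\times\mathbb{C}$.
   Context: $\mathbb{T}^1=\mathbb{R}/\mathbb{Z}$, $\langle x\rangle$ is the fractional part. A fibred polynomial dynamics over an irrational rotation is a continuous map $P(\theta,z)=(\theta+\alpha,p_\theta(z))$ with $\alpha$ irrational and $p_\theta$ polynomials with coefficients continuous in $\theta$. An $n$-curve is a set $\Gamma=\{(\langle n\theta\rangle,\tilde\gamma(\theta)):\theta\in\mathbb{T}^1\}$ with $\tilde\gamma:\mathbb{T}^1\to\mathbb{C}$ continuous injective; a multi-curve here means such an $n$-curve. $\Gamma$ is invariant for $P$ if for some such $\tilde\gamma$ and some $\tau\in\{0,\dots,n-1\}$, $p_{\langle n\theta\rangle}(\tilde\gamma(\theta))=\tilde\gamma(\theta+\tfrac{\alpha+\tau}{n})$ for all $\theta$; it is attracting if $\exp\big(\int_{\mathbb{T}^1}\log|p'_{\langle n\theta\rangle}(\tilde\gamma(\theta))|\,d\theta\big)<1$ (integrand in $L^1$). *)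

theory Defs
  imports "HOL-Analysis.Analysis" "HOL-Computational_Algebra.Polynomial"
begin

text \<open>The circle T^1 = R/Z is represented through 1-periodic lifts to R.
  Points of T^1 x C are represented by points of R x C; a subset of T^1 x C
  corresponds to a subset of R x C invariant under (x,z) |-> (x+1,z).
  Openness in T^1 x C is equivalent to openness of the lifted set in R x C,
  and the distance in T^1 x C to a set equals the distance in R x C to its
  (periodic) lift.\<close>

definition fibred_poly_dyn :: "real \<Rightarrow> (real \<Rightarrow> complex poly) \<Rightarrow> bool" where
  "fibred_poly_dyn \<alpha> p \<longleftrightarrow> \<alpha> \<notin> \<rat> \<and>
     (\<forall>\<theta>. p (\<theta> + 1) = p \<theta>) \<and>
     (\<forall>k. continuous_on UNIV (\<lambda>\<theta>. coeff (p \<theta>) k)) \<and>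
     (\<exists>d. \<forall>\<theta>. degree (p \<theta>) \<le> d)"

definition fibred_map :: "real \<Rightarrow> (real \<Rightarrow> complex poly) \<Rightarrow> real \<times> complex \<Rightarrow> real \<times> complex" where
  "fibred_map \<alpha> p = (\<lambda>(\<theta>, z). (\<theta> + \<alpha>, poly (p \<theta>) z))"

definition circle_embedding :: "(real \<Rightarrow> complex) \<Rightarrow> bool" where
  "circle_embedding \<gamma> \<longleftrightarrow> continuous_on UNIV \<gamma> \<and> (\<forall>\<theta>. \<gamma> (\<theta> + 1) = \<gamma> \<theta>) \<and>
     (\<forall>s t. \<gamma> s = \<gamma> t \<longrightarrow> s - t \<in> \<int>)"

text \<open>Lift to R x C of the n-curve {(<n theta>, gamma theta)}.\<close>
definition ncurve_lift :: "nat \<Rightarrow> (real \<Rightarrow> complex) \<Rightarrow> (real \<times> complex) set" where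
  "ncurve_lift n \<gamma> = {(x, \<gamma> \<theta>) | x \<theta>. x - real n * \<theta> \<in> \<int>}"

definition invariant_ncurve :: "(real \<Rightarrow> complex poly) \<Rightarrow> real \<Rightarrow> nat \<Rightarrow> (real \<Rightarrow> complex) \<Rightarrow> bool" where
  "invariant_ncurve p \<alpha> n \<gamma> \<longleftrightarrow> (\<exists>\<tau>\<in>{0..<n}. \<forall>\<theta>.
      poly (p (frac (real n * \<theta>))) (\<gamma> \<theta>) = \<gamma> (\<theta> + (\<alpha> + real \<tau>) / real n))"

definition attracting_ncurve :: "(real \<Rightarrow> complex poly) \<Rightarrow> nat \<Rightarrow> (real \<Rightarrow> complex) \<Rightarrow> bool" where
  "attracting_ncurve p n \<gamma> \<longleftrightarrow>
     (let f = (\<lambda>\<theta>. ln (cmod (poly (pderiv (p (frac (real n * \<theta>)))) (\<gamma> \<theta>)))) in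
       integrable (lebesgue_on {0..1}) f \<and> exp (integral\<^sup>L (lebesgue_on {0..1}) f) < 1)"

definition basin :: "real \<Rightarrow> (real \<Rightarrow> complex poly) \<Rightarrow> (real \<times> complex) set \<Rightarrow> (real \<times> complex) set" where
  "basin \<alpha> p \<Gamma> = {w. (\<lambda>k. infdist ((fibred_map \<alpha> p ^^ k) w) \<Gamma>) \<longlonglongrightarrow> 0}"

end

theory Submission
  imports Defs
begin

text \<open>
  Near the curve, the fibre map over the parameter \<open>\<theta>\<close> multiplies the distance to the curve by
  the modulus of the derivative of the fibre polynomial at \<open>\<gamma> \<theta>\<close> (the multiplier), up to a
  quadratic error that is uniform in \<open>\<theta>\<close>. As the logarithm of the multiplier has negative
  integral, so has \<open>ln (multiplier + \<epsilon>)\<close> for some \<open>\<epsilon> > 0\<close> (dominated convergence), and this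
  function is continuous. The orbits of the irrational rotation \<open>\<theta> \<mapsto> \<theta> + (\<alpha> + \<tau>) / n\<close> are
  equidistributed uniformly in the starting point (Kronecker's theorem and Riemann sums), so
  its Birkhoff sums over some block length \<open>N\<close> are uniformly negative. Hence, once small, the distance to the
  curve shrinks by a factor \<open>\<mu> < 1\<close> over any \<open>N\<close> consecutive steps: a uniform neighbourhood of
  the curve lies in the basin, and the basin is the union of the open preimages of that
  neighbourhood under the iterates.
\<close>

section \<open>Continuous periodic functions\<close>

lemma periodic_plus_of_int:
  assumes "\<And>x. f (x + 1) = f (x::real)"
  shows "f (x + of_int m) = f x"
proof -
  have "periodic_fun_simple' (\<lambda>y. f (x + y))"
    by unfold_locales (metis add.assoc assms)
  from periodic_fun_simple'.of_int[OF this, of m] show ?thesis by simp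
qed

lemma periodic_frac:
  assumes "\<And>x. f (x + 1) = f (x::real)"
  shows "f (frac x) = f x"
  using periodic_plus_of_int[of f x "- \<lfloor>x\<rfloor>", OF assms] by (simp add: frac_def)

lemma bounded_range_periodic:
  fixes f :: "real \<Rightarrow> 'a::metric_space"
  assumes "continuous_on UNIV f" "\<And>x. f (x + 1) = f x"
  shows "bounded (range f)"
proof -
  have "f x \<in> f ` {0..1}" for x
    using periodic_frac[of f x, OF assms(2)] frac_ge_0[of x] frac_lt_1[of x]
    by (metis atLeastAtMost_iff image_eqI less_imp_le)
  moreover have "compact (f ` {0..1})"
    by (rule compact_continuous_image) (auto intro: continuous_on_subset[OF assms(1)])
  ultimately show ?thesis
    by (meson bounded_subset compact_imp_bounded image_subsetI)
qed

lemma uniformly_continuous_periodic: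
  fixes f :: "real \<Rightarrow> 'a::metric_space"
  assumes "continuous_on UNIV f" "\<And>x. f (x + 1) = f x"
  shows "uniformly_continuous_on UNIV f"
  unfolding uniformly_continuous_on_def
proof (intro allI impI)
  fix e :: real assume "e > 0"
  have "uniformly_continuous_on {-1..2} f"
    by (rule compact_uniformly_continuous) (auto intro: continuous_on_subset[OF assms(1)])
  then obtain d where d: "d > 0"
    "\<And>x y. x \<in> {-1..2} \<Longrightarrow> y \<in> {-1..2} \<Longrightarrow> dist y x < d \<Longrightarrow> dist (f y) (f x) < e"
    using \<open>e > 0\<close> unfolding uniformly_continuous_on_def by metis
  have "dist (f y) (f x) < e" if xy: "dist y x < min d 1" for x y
  proof -
    define m where "m = \<lfloor>x\<rfloor>"
    have f_shift: "f x = f (x - m)" "f y = f (y - m)"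
      using periodic_plus_of_int[of f, OF assms(2), of _ "- m"] by simp_all
    have "x - m = frac x"
      unfolding m_def frac_def ..
    moreover have "\<bar>y - x\<bar> < d" "\<bar>y - x\<bar> < 1"
      using xy by (auto simp: dist_real_def)
    ultimately have "x - m \<in> {-1..2}" "y - m \<in> {-1..2}" "dist (y - m) (x - m) < d"
      using frac_ge_0[of x] frac_lt_1[of x] unfolding dist_real_def atLeastAtMost_iff abs_less_iff
      by linarith+
    then show ?thesis
      using d(2) f_shift by simp
  qed
  then show "\<exists>d>0. \<forall>x\<in>UNIV. \<forall>y\<in>UNIV. dist y x < d \<longrightarrow> dist (f y) (f x) < e"
    using d(1) by (intro exI[of _ "min d 1"]) auto
qed

lemma integral_periodic_unit_interval:
  fixes h :: "real \<Rightarrow> real"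
  assumes "continuous_on UNIV h" "\<And>x. h (x + 1) = h x"
  shows "integral {x..x + 1} h = integral {0..1} h"
proof -
  have int: "h integrable_on {a..b}" for a b
    by (rule integrable_continuous_interval) (use assms(1) continuous_on_subset in blast)
  have shift: "integral {a + of_int m..b + of_int m} h = integral {a..b} h" for a b m
  proof -
    have "h \<circ> (+) (of_int m) = h"
      using periodic_plus_of_int[of h, OF assms(2)] by (auto simp: add.commute)
    then show ?thesis
      using integral_shift_Icc_real[of a b h "of_int m"] by simp
  qed
  define y where "y = frac x"
  have y: "0 \<le> y" "y \<le> 1"
    using frac_ge_0 frac_lt_1 unfolding y_def by (auto intro: less_imp_le)
  have "integral {x..x + 1} h = integral {y..y + 1} h"
    using shift[where a=y and b="y + 1" and m="\<lfloor>x\<rfloor>"] by (simp add: y_def frac_def algebra_simps)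
  also have "\<dots> = integral {y..1} h + integral {1..y + 1} h"
    using y by (intro Henstock_Kurzweil_Integration.integral_combine[symmetric] int) auto
  also have "integral {1..y + 1} h = integral {0..y} h"
    using shift[where a=0 and b=y and m=1] by (simp add: add.commute)
  also have "integral {y..1} h + integral {0..y} h = integral {0..1} h"
    using y by (subst add.commute, intro Henstock_Kurzweil_Integration.integral_combine int) auto
  finally show ?thesis .
qed

section \<open>Birkhoff sums over an irrational rotation\<close>

lemma integral_ge_const_real:
  fixes h :: "real \<Rightarrow> real"
  assumes "continuous_on {a..b} h" "a \<le> b" "\<And>x. x \<in> {a..b} \<Longrightarrow> c \<le> h x"
  shows "c * (b - a) \<le> integral {a..b} h"
  using integral_component_lbound_real[of h a b c 1] assms integrable_continuous_interval[OF assms(1)]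
  by simp

lemma periodic_riemann_sum_le:
  fixes h :: "real \<Rightarrow> real"
  assumes cont: "continuous_on UNIV h" and per: "\<And>x. h (x + 1) = h x"
    and mean: "integral {0..1} h = 0" and bound: "\<And>x. \<bar>h x\<bar> \<le> B"
    and osc: "\<And>x y. \<bar>x - y\<bar> \<le> \<rho> \<Longrightarrow> \<bar>h x - h y\<bar> \<le> e"
    and \<rho>: "\<rho> > 0" "real L * \<rho> \<le> 1" "1 \<le> real (Suc L) * \<rho>"
  shows "(\<Sum>l<L. h (x + real l * \<rho>)) \<le> B + e * real L"
proof -
  have cont': "continuous_on S h" for S
    using cont continuous_on_subset by blast
  have riemann: "\<rho> * (\<Sum>l<K. h (x + real l * \<rho>)) \<le> integral {x..x + real K * \<rho>} h + real K * \<rho> * e"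
    for K
  proof (induction K)
    case 0
    then show ?case by simp
  next
    case (Suc K)
    let ?u = "x + real K * \<rho>" and ?v = "x + real (Suc K) * \<rho>"
    have "(h ?u - e) * (?v - ?u) \<le> integral {?u..?v} h"
    proof (rule integral_ge_const_real[OF cont'])
      fix y assume "y \<in> {?u..?v}"
      then have "\<bar>h y - h ?u\<bar> \<le> e"
        by (intro osc) (auto simp: algebra_simps)
      then show "h ?u - e \<le> h y" by linarith
    qed (use \<rho> in \<open>simp add: algebra_simps\<close>)
    moreover have "integral {x..?u} h + integral {?u..?v} h = integral {x..?v} h"
      using \<rho> by (intro Henstock_Kurzweil_Integration.integral_combine integrable_continuous_interval cont')
        (auto simp: algebra_simps)
    ultimately show ?case
      using Suc.IH by (simp add: algebra_simps)
  qed
  have "integral {x..x + real L * \<rho>} h + integral {x + real L * \<rho>..x + 1} h = integral {x..x + 1} h"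
    using \<rho> by (intro Henstock_Kurzweil_Integration.integral_combine integrable_continuous_interval cont')
      (auto simp: algebra_simps)
  moreover have "integral {x..x + 1} h = 0"
    using integral_periodic_unit_interval[OF cont per] mean by simp
  moreover have "- B * ((x + 1) - (x + real L * \<rho>)) \<le> integral {x + real L * \<rho>..x + 1} h"
  proof (rule integral_ge_const_real[OF cont'])
    show "- B \<le> h y" for y
      using bound[of y] by linarith
  qed (use \<rho> in auto)
  moreover have "0 \<le> B"
    using bound[of 0] by linarith
  then have "B * ((x + 1) - (x + real L * \<rho>)) \<le> B * \<rho>"
    using \<rho> by (intro mult_left_mono) (auto simp: algebra_simps)
  ultimately have "\<rho> * (\<Sum>l<L. h (x + real l * \<rho>)) \<le> \<rho> * (B + e * real L)"
    using riemann[of L] by (simp add: algebra_simps)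
  then show ?thesis
    using \<rho>(1) by simp
qed

lemma sum_rotation_orbit_regroup:
  fixes g :: "real \<Rightarrow> 'a::comm_monoid_add"
  assumes per: "\<And>x. g (x + 1) = g x" and return: "real k * \<beta> = of_int m + s"
  shows "(\<Sum>j<L * k. g (\<theta> + real j * \<beta>)) = (\<Sum>r<k. \<Sum>l<L. g (\<theta> + real r * \<beta> + real l * s))"
proof -
  have shift: "g (\<theta> + real (r + l * k) * \<beta>) = g (\<theta> + real r * \<beta> + real l * s)" for r l
  proof -
    have "\<theta> + real (r + l * k) * \<beta> = \<theta> + real r * \<beta> + real l * s + of_int (int l * m)"
      using return by (simp add: algebra_simps flip: mult.assoc)
    then show ?thesis
      using periodic_plus_of_int[of g, OF per] by metis
  qed
  have "(\<Sum>j<L * k. g (\<theta> + real j * \<beta>)) = (\<Sum>l<L. \<Sum>j\<in>{l * k..<l * k + k}. g (\<theta> + real j * \<beta>))"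
    by (rule sum.nat_group[symmetric])
  also have "\<dots> = (\<Sum>l<L. \<Sum>r<k. g (\<theta> + real (r + l * k) * \<beta>))"
    using sum.shift_bounds_nat_ivl[of "\<lambda>j. g (\<theta> + real j * \<beta>)" 0 "l * k" k for l]
    by (simp add: atLeast0LessThan add.commute)
  also have "\<dots> = (\<Sum>r<k. \<Sum>l<L. g (\<theta> + real r * \<beta> + real l * s))"
    unfolding shift by (rule sum.swap)
  finally show ?thesis .
qed

lemma nat_floor_inverse_bounds:
  fixes s :: real
  assumes "0 < s"
  shows "real (nat \<lfloor>1 / s\<rfloor>) * s \<le> 1" "1 \<le> real (Suc (nat \<lfloor>1 / s\<rfloor>)) * s"
    and "1 / s - 1 < real (nat \<lfloor>1 / s\<rfloor>)"
proof -
  have "real (nat \<lfloor>1 / s\<rfloor>) = of_int \<lfloor>1 / s\<rfloor>"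
    using assms by (intro of_nat_nat) simp
  then have le: "real (nat \<lfloor>1 / s\<rfloor>) \<le> 1 / s" and less: "1 / s < real (nat \<lfloor>1 / s\<rfloor>) + 1"
    by simp_all
  show "real (nat \<lfloor>1 / s\<rfloor>) * s \<le> 1"
    using le assms by (simp add: le_divide_eq)
  show "1 \<le> real (Suc (nat \<lfloor>1 / s\<rfloor>)) * s"
    using less assms by (simp add: divide_less_eq add.commute)
  show "1 / s - 1 < real (nat \<lfloor>1 / s\<rfloor>)"
    using less by linarith
qed

lemma periodic_riemann_sums_small_step:
  fixes g :: "real \<Rightarrow> real"
  assumes cont: "continuous_on UNIV g" and per: "\<And>x. g (x + 1) = g x"
    and mean: "integral {0..1} g = 0" and \<epsilon>: "\<epsilon> > 0"
  obtains \<rho> where "0 < \<rho>" "\<rho> \<le> 1"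
    "\<And>s x. 0 < s \<Longrightarrow> s < \<rho> \<Longrightarrow> (\<Sum>l<nat \<lfloor>1 / s\<rfloor>. g (x + real l * s)) \<le> real (nat \<lfloor>1 / s\<rfloor>) * \<epsilon>"
proof -
  obtain B where B: "\<And>x. \<bar>g x\<bar> \<le> B"
    using bounded_range_periodic[OF cont per] by (auto simp: bounded_iff)
  then have "0 \<le> B"
    by (meson abs_ge_zero order_trans)
  then have "0 \<le> 2 * B / \<epsilon>"
    using \<epsilon> by simp
  obtain d where d: "d > 0" "\<And>x y. \<bar>x - y\<bar> < d \<Longrightarrow> \<bar>g x - g y\<bar> < \<epsilon> / 2"
  proof -
    from uniformly_continuous_periodic[OF cont per] \<epsilon> obtain d
      where "d > 0" "\<forall>x\<in>UNIV. \<forall>y\<in>UNIV. \<bar>y - x\<bar> < d \<longrightarrow> \<bar>g y - g x\<bar> < \<epsilon> / 2"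
      unfolding uniformly_continuous_on_def dist_real_def by (meson half_gt_zero)
    then show thesis
      using that by blast
  qed
  define \<rho> where "\<rho> = min d (1 / (2 * B / \<epsilon> + 1))"
  have "1 / (2 * B / \<epsilon> + 1) \<le> 1" "0 < 1 / (2 * B / \<epsilon> + 1)"
    using \<open>0 \<le> 2 * B / \<epsilon>\<close> by (simp_all add: field_simps)
  then have \<rho>: "0 < \<rho>" "\<rho> \<le> 1" "\<rho> \<le> d" "\<rho> \<le> 1 / (2 * B / \<epsilon> + 1)"
    using d(1) unfolding \<rho>_def by (simp_all add: min.coboundedI2)
  have "(\<Sum>l<nat \<lfloor>1 / s\<rfloor>. g (x + real l * s)) \<le> real (nat \<lfloor>1 / s\<rfloor>) * \<epsilon>"
    if s: "0 < s" "s < \<rho>" for s x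
  proof -
    define L where "L = nat \<lfloor>1 / s\<rfloor>"
    have "2 * B / \<epsilon> + 1 \<le> 1 / \<rho>"
      using le_imp_inverse_le[OF \<rho>(4) \<rho>(1)] by (simp add: inverse_eq_divide)
    also have "\<dots> < 1 / s"
      using s by (simp add: frac_less2)
    finally have "2 * B / \<epsilon> < real L"
      using nat_floor_inverse_bounds(3)[OF s(1)] unfolding L_def by linarith
    then have "B \<le> \<epsilon> / 2 * real L"
      using \<epsilon> by (simp add: field_simps)
    moreover have "(\<Sum>l<L. g (x + real l * s)) \<le> B + \<epsilon> / 2 * real L"
    proof (rule periodic_riemann_sum_le[OF cont per mean B _ s(1)])
      show "\<bar>g x - g y\<bar> \<le> \<epsilon> / 2" if "\<bar>x - y\<bar> \<le> s" for x y
        using d(2)[of x y] that s \<rho> by simp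
    qed (use nat_floor_inverse_bounds[OF s(1)] in \<open>simp_all add: L_def\<close>)
    ultimately show ?thesis
      unfolding L_def by (simp add: algebra_simps)
  qed
  with \<rho>(1,2) show ?thesis
    using that by blast
qed

lemma birkhoff_sum_mean_zero_le:
  fixes g :: "real \<Rightarrow> real"
  assumes cont: "continuous_on UNIV g" and per: "\<And>x. g (x + 1) = g x"
    and mean: "integral {0..1} g = 0" and irr: "\<beta> \<notin> \<rat>" and \<epsilon>: "\<epsilon> > 0"
  obtains N where "N > 0" "\<And>\<theta>. (\<Sum>j<N. g (\<theta> + real j * \<beta>)) \<le> real N * \<epsilon>"
proof -
  obtain \<rho> where \<rho>: "0 < \<rho>" "\<rho> \<le> 1" and riemann:
    "\<And>s x. 0 < s \<Longrightarrow> s < \<rho> \<Longrightarrow> (\<Sum>l<nat \<lfloor>1 / s\<rfloor>. g (x + real l * s)) \<le> real (nat \<lfloor>1 / s\<rfloor>) * \<epsilon>"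
    using periodic_riemann_sums_small_step[OF cont per mean \<epsilon>] by blast
  \<comment> \<open>At a return time \<open>k\<close> of the rotation close to \<open>0\<close> from the right, the orbit splits into
    \<open>k\<close> arithmetic progressions with a small step \<open>s\<close>, whose sums are Riemann sums.\<close>
  obtain k where k: "k > 0" "\<bar>frac (real k * \<beta>) - \<rho> / 2\<bar> < \<rho> / 2"
    using Kronecker_approx_1_explicit[OF irr, of "\<rho> / 2" "\<rho> / 2"] \<rho> by auto
  define s where "s = frac (real k * \<beta>)"
  define L where "L = nat \<lfloor>1 / s\<rfloor>"
  have s: "0 < s" "s < \<rho>"
    using k(2) unfolding s_def abs_less_iff by linarith+
  then have "L > 0"
    using nat_floor_inverse_bounds(3)[OF s(1)] \<rho>(2) unfolding L_def by (simp add: field_simps)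
  have return: "real k * \<beta> = of_int \<lfloor>real k * \<beta>\<rfloor> + s"
    unfolding s_def frac_def by simp
  have "(\<Sum>j<L * k. g (\<theta> + real j * \<beta>)) \<le> real (L * k) * \<epsilon>" for \<theta>
  proof -
    have "(\<Sum>j<L * k. g (\<theta> + real j * \<beta>)) = (\<Sum>r<k. \<Sum>l<L. g (\<theta> + real r * \<beta> + real l * s))"
      by (rule sum_rotation_orbit_regroup[of g, OF per return])
    also have "\<dots> \<le> (\<Sum>r<k. real L * \<epsilon>)"
      unfolding L_def using riemann s by (intro sum_mono) blast
    finally show ?thesis
      by (simp add: algebra_simps)
  qed
  moreover have "L * k > 0"
    using \<open>L > 0\<close> k(1) by simp
  ultimately show ?thesis
    using that by blast
qed

lemma birkhoff_sum_le:
  fixes h :: "real \<Rightarrow> real"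
  assumes cont: "continuous_on UNIV h" and per: "\<And>x. h (x + 1) = h x"
    and irr: "\<beta> \<notin> \<rat>" and \<epsilon>: "\<epsilon> > 0"
  obtains N where "N > 0" "\<And>\<theta>. (\<Sum>j<N. h (\<theta> + real j * \<beta>)) \<le> real N * (integral {0..1} h + \<epsilon>)"
proof -
  define I where "I = integral {0..1} h"
  have "h integrable_on {0..1}"
    by (rule integrable_continuous_interval) (rule continuous_on_subset[OF cont], simp)
  from Henstock_Kurzweil_Integration.integral_diff[OF this integrable_const_ivl[of I 0 1]]
  have "integral {0..1} (\<lambda>x. h x - I) = 0"
    by (simp add: I_def)
  moreover have "continuous_on UNIV (\<lambda>x. h x - I)"
    by (intro continuous_intros cont)
  moreover have "h (x + 1) - I = h x - I" for x
    using per by simp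
  ultimately obtain N where "N > 0" and N: "\<And>\<theta>. (\<Sum>j<N. h (\<theta> + real j * \<beta>) - I) \<le> real N * \<epsilon>"
    using birkhoff_sum_mean_zero_le[of "\<lambda>x. h x - I" \<beta> \<epsilon>] irr \<epsilon> by blast
  have "(\<Sum>j<N. h (\<theta> + real j * \<beta>)) \<le> real N * (I + \<epsilon>)" for \<theta>
    using N[of \<theta>] by (simp add: sum_subtractf distrib_left)
  with \<open>N > 0\<close> show ?thesis
    using that unfolding I_def by blast
qed

section \<open>Perturbing a negative logarithmic integral\<close>

lemma max_ln_ln_add_inverse_eq:
  fixes x r :: real
  assumes "0 \<le> x" "1 \<le> r"
  shows "max (ln x) (ln (x + inverse r)) = (if x = 0 then 0 else ln (x + inverse r))"
proof (cases "x = 0")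
  case True
  have "ln (inverse r) \<le> 0"
    using assms(2) by (simp add: ln_inverse)
  then show ?thesis
    using True by simp
next
  case False
  then have "ln x \<le> ln (x + inverse r)"
    using assms by (subst ln_le_cancel_iff) (auto intro: add_nonneg_pos)
  then show ?thesis
    using False by simp
qed

lemma tendsto_max_ln_ln_add_inverse:
  fixes x :: real
  assumes "0 \<le> x"
  shows "((\<lambda>r. max (ln x) (ln (x + inverse r))) \<longlongrightarrow> ln x) at_top"
proof (cases "x = 0")
  case True
  then show ?thesis
    using max_ln_ln_add_inverse_eq[OF assms]
    by (intro tendsto_eventually) (auto intro: eventually_at_top_linorderI[of 1])
next
  case False
  have "((\<lambda>r. ln (x + inverse r)) \<longlongrightarrow> ln (x + 0)) at_top"
    using assms False by (intro tendsto_intros tendsto_inverse_0_at_top filterlim_ident) auto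
  moreover have "\<forall>\<^sub>F r in at_top. ln (x + inverse r) = max (ln x) (ln (x + inverse r))"
    using max_ln_ln_add_inverse_eq[OF assms] False by (intro eventually_at_top_linorderI[of 1]) simp
  ultimately show ?thesis
    by (simp add: Lim_transform_eventually)
qed

lemma abs_max_ln_ln_add_inverse_le:
  fixes x r :: real
  assumes "0 \<le> x" "1 \<le> r"
  shows "\<bar>max (ln x) (ln (x + inverse r))\<bar> \<le> \<bar>ln x\<bar> + \<bar>ln (x + 1)\<bar>"
proof -
  have "0 < inverse r" "inverse r \<le> 1"
    using assms(2) by (simp_all add: inverse_le_1_iff)
  then have "ln (x + inverse r) \<le> ln (x + 1)"
    using assms(1) by (subst ln_le_cancel_iff) (auto intro: add_nonneg_pos)
  then show ?thesis
    by (auto simp: max_def)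
qed

lemma tendsto_integral_max_ln_ln_add_inverse:
  fixes a :: "'a \<Rightarrow> real"
  assumes meas: "a \<in> borel_measurable M" and nonneg: "\<And>t. 0 \<le> a t"
    and int: "integrable M (\<lambda>t. ln (a t))" "integrable M (\<lambda>t. ln (a t + 1))"
  shows "((\<lambda>r. \<integral>t. max (ln (a t)) (ln (a t + inverse r)) \<partial>M) \<longlongrightarrow> \<integral>t. ln (a t) \<partial>M) at_top"
proof (rule integral_dominated_convergence_at_top[where w = "\<lambda>t. \<bar>ln (a t)\<bar> + \<bar>ln (a t + 1)\<bar>"])
  show "(\<lambda>t. ln (a t)) \<in> borel_measurable M" "(\<lambda>t. max (ln (a t)) (ln (a t + inverse r))) \<in> borel_measurable M"
    for r
    using meas by measurable
  show "integrable M (\<lambda>t. \<bar>ln (a t)\<bar> + \<bar>ln (a t + 1)\<bar>)"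
    using int by (intro Bochner_Integration.integrable_add integrable_abs)
  show "AE t in M. ((\<lambda>r. max (ln (a t)) (ln (a t + inverse r))) \<longlongrightarrow> ln (a t)) at_top"
    using tendsto_max_ln_ln_add_inverse[OF nonneg] by simp
  show "\<forall>\<^sub>F r in at_top. AE t in M. norm (max (ln (a t)) (ln (a t + inverse r))) \<le> \<bar>ln (a t)\<bar> + \<bar>ln (a t + 1)\<bar>"
    using abs_max_ln_ln_add_inverse_le[OF nonneg] by (intro eventually_at_top_linorderI[of 1]) simp
qed

lemma eventually_integral_ln_add_neg:
  fixes a :: "real \<Rightarrow> real"
  assumes cont: "continuous_on {0..1} a" and nonneg: "\<And>t. 0 \<le> a t"
    and int: "integrable (lebesgue_on {0..1}) (\<lambda>t. ln (a t))"
    and neg: "integral\<^sup>L (lebesgue_on {0..1}) (\<lambda>t. ln (a t)) < 0"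
  shows "\<forall>\<^sub>F \<delta> in at_right 0. integral {0..1} (\<lambda>t. ln (a t + \<delta>)) < 0"
proof -
  let ?M = "lebesgue_on {0..1::real}"
  have ln_add_cont: "continuous_on {0..1} (\<lambda>t. ln (a t + c))" if "c > 0" for c
  proof -
    have "a t + c \<noteq> 0" for t
      using nonneg[of t] that by linarith
    then show ?thesis
      by (intro continuous_intros cont) auto
  qed
  have ln_add_int: "integrable ?M (\<lambda>t. ln (a t + c))" if "c > 0" for c
    by (rule continuous_imp_integrable_real[OF ln_add_cont[OF that]])
  have "a \<in> borel_measurable ?M"
    by (rule continuous_imp_measurable_on_sets_lebesgue[OF cont]) simp
  \<comment> \<open>Where \<open>a\<close> vanishes, \<open>ln (a t + \<delta>)\<close> tends to \<open>-\<infinity>\<close> while \<open>ln (a t)\<close> is the junk value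
    \<open>ln 0 = 0\<close>; the maximum with \<open>ln (a t)\<close> converges pointwise and only increases the integral.\<close>
  from tendsto_integral_max_ln_ln_add_inverse[OF this nonneg int ln_add_int] neg
  have max_neg: "\<forall>\<^sub>F r in at_top. (\<integral>t. max (ln (a t)) (ln (a t + inverse r)) \<partial>?M) < 0"
    by (simp add: order_tendstoD)
  have below_max: "integral {0..1} (\<lambda>t. ln (a t + inverse r)) \<le> (\<integral>t. max (ln (a t)) (ln (a t + inverse r)) \<partial>?M)"
    if "r > 0" for r
  proof -
    have "integral {0..1} (\<lambda>t. ln (a t + inverse r)) = (\<integral>t. ln (a t + inverse r) \<partial>?M)"
      using that by (intro lebesgue_integral_eq_integral[symmetric] ln_add_int) simp_all
    also have "\<dots> \<le> (\<integral>t. max (ln (a t)) (ln (a t + inverse r)) \<partial>?M)"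
      using that by (intro integral_mono integrable_max int ln_add_int) simp_all
    finally show ?thesis .
  qed
  from max_neg eventually_gt_at_top[of 0]
  have "\<forall>\<^sub>F r in at_top. integral {0..1} (\<lambda>t. ln (a t + inverse r)) < 0"
    by eventually_elim (use below_max in fastforce)
  then show ?thesis
    by (simp add: eventually_at_right_to_top)
qed

section \<open>Polynomials with continuously varying coefficients\<close>

lemma poly_eq_sum_coeff:
  fixes z :: "'a::{comm_semiring_0,semiring_1}"
  assumes "degree q \<le> d"
  shows "poly q z = (\<Sum>i\<le>d. coeff q i * z ^ i)"
proof -
  have "poly q z = (\<Sum>i\<le>degree q. coeff q i * z ^ i)"
    by (rule poly_altdef)
  also have "\<dots> = (\<Sum>i\<le>d. coeff q i * z ^ i)"
    by (rule sum.mono_neutral_left) (use assms in \<open>auto simp: coeff_eq_0\<close>)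
  finally show ?thesis .
qed

lemma continuous_on_poly_family:
  fixes r :: "real \<Rightarrow> complex poly"
  assumes "\<And>k. continuous_on UNIV (\<lambda>\<theta>. coeff (r \<theta>) k)" "\<And>\<theta>. degree (r \<theta>) \<le> d"
  shows "continuous_on UNIV (\<lambda>w. poly (r (fst w)) (snd w))"
proof -
  have eq: "(\<lambda>w. poly (r (fst w)) (snd w)) = (\<lambda>w. \<Sum>i\<le>d. coeff (r (fst w)) i * snd w ^ i)"
    using poly_eq_sum_coeff[OF assms(2)] by auto
  show ?thesis
    unfolding eq by (intro continuous_intros continuous_on_compose2[OF assms(1)]) auto
qed

lemma poly_pderiv_eq_sum_coeff:
  fixes q :: "complex poly"
  assumes "degree q \<le> d"
  shows "poly (pderiv q) v = (\<Sum>i\<le>d. coeff q i * (of_nat i * v ^ (i - 1)))"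
proof -
  have "poly q = (\<lambda>x. \<Sum>i\<le>d. coeff q i * x ^ i)"
    using poly_eq_sum_coeff[OF assms] by auto
  then have "DERIV (\<lambda>x. \<Sum>i\<le>d. coeff q i * x ^ i) v :> poly (pderiv q) v"
    using poly_DERIV[of q v] by simp
  moreover have "DERIV (\<lambda>x. \<Sum>i\<le>d. coeff q i * x ^ i) v :> (\<Sum>i\<le>d. coeff q i * (of_nat i * v ^ (i - 1)))"
    by (intro derivative_eq_intros) auto
  ultimately show ?thesis
    using DERIV_unique by blast
qed

lemma norm_power_taylor_le:
  fixes z v :: complex
  assumes R: "1 \<le> R" "cmod z \<le> R" "cmod v \<le> R"
  shows "cmod (z ^ k - v ^ k - of_nat k * v ^ (k - 1) * (z - v)) \<le> real k ^ 2 * R ^ k * cmod (z - v) ^ 2"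
proof (induction k)
  case 0
  then show ?case by simp
next
  case (Suc k)
  let ?c = "cmod (z - v) ^ 2"
  show ?case
  proof (cases "k = 0")
    case True
    then show ?thesis
      using R(1) by simp
  next
    case False
    have split: "z ^ Suc k - v ^ Suc k - of_nat (Suc k) * v ^ (Suc k - 1) * (z - v)
        = z * (z ^ k - v ^ k - of_nat k * v ^ (k - 1) * (z - v)) + of_nat k * v ^ (k - 1) * (z - v) ^ 2"
      using False by (cases k) (simp_all add: algebra_simps power2_eq_square)
    have "cmod v ^ (k - 1) \<le> R ^ (k - 1)"
      using R(3) by (intro power_mono) auto
    also have "\<dots> \<le> R ^ Suc k"
      using R(1) by (intro power_increasing) auto
    finally have v_pow: "cmod v ^ (k - 1) \<le> R ^ Suc k" .
    have "cmod (z ^ Suc k - v ^ Suc k - of_nat (Suc k) * v ^ (Suc k - 1) * (z - v))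
        \<le> cmod z * cmod (z ^ k - v ^ k - of_nat k * v ^ (k - 1) * (z - v)) + real k * cmod v ^ (k - 1) * ?c"
      unfolding split by (rule order_trans[OF norm_triangle_ineq]) (simp add: norm_mult norm_power)
    also have "\<dots> \<le> R * (real k ^ 2 * R ^ k * ?c) + real k * R ^ Suc k * ?c"
      using R Suc.IH v_pow by (intro add_mono mult_mono mult_right_mono mult_left_mono) auto
    also have "\<dots> = (real k ^ 2 + real k) * R ^ Suc k * ?c"
      by (simp add: algebra_simps)
    also have "\<dots> \<le> real (Suc k) ^ 2 * R ^ Suc k * ?c"
      using R(1) by (intro mult_right_mono) (auto simp: power2_eq_square algebra_simps)
    finally show ?thesis .
  qed
qed

lemma norm_poly_taylor_le:
  fixes q :: "complex poly"
  assumes "degree q \<le> d" "\<And>i. cmod (coeff q i) \<le> B" "1 \<le> R" "cmod z \<le> R" "cmod v \<le> R"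
  shows "cmod (poly q z - poly q v - poly (pderiv q) v * (z - v))
          \<le> (\<Sum>i\<le>d. B * real i ^ 2 * R ^ i) * cmod (z - v) ^ 2"
proof -
  have "poly q z - poly q v - poly (pderiv q) v * (z - v)
      = (\<Sum>i\<le>d. coeff q i * (z ^ i - v ^ i - of_nat i * v ^ (i - 1) * (z - v)))"
    unfolding poly_eq_sum_coeff[OF assms(1)] poly_pderiv_eq_sum_coeff[OF assms(1)]
    by (simp only: sum_distrib_right sum_subtractf[symmetric]) (intro sum.cong, auto simp: algebra_simps)
  also have "cmod \<dots> \<le> (\<Sum>i\<le>d. cmod (coeff q i) * cmod (z ^ i - v ^ i - of_nat i * v ^ (i - 1) * (z - v)))"
    by (rule order_trans[OF norm_sum]) (simp add: norm_mult)
  also have "\<dots> \<le> (\<Sum>i\<le>d. B * (real i ^ 2 * R ^ i * cmod (z - v) ^ 2))"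
    using assms(2)[of 0]
    by (intro sum_mono mult_mono norm_power_taylor_le assms) (auto intro: order_trans[OF norm_ge_zero])
  finally show ?thesis
    by (simp add: sum_distrib_right mult.assoc)
qed

lemma norm_poly_diff_le:
  fixes q :: "complex poly"
  assumes "degree q \<le> d" "\<And>i. cmod (coeff q i) \<le> B" "0 \<le> R" "cmod v \<le> R" "cmod (z - v) \<le> 1"
  shows "cmod (poly q z - poly q v)
    \<le> (cmod (poly (pderiv q) v) + (\<Sum>i\<le>d. B * real i ^ 2 * (R + 1) ^ i) * cmod (z - v)) * cmod (z - v)"
proof -
  let ?K = "\<Sum>i\<le>d. B * real i ^ 2 * (R + 1) ^ i"
  have "cmod z \<le> cmod v + cmod (z - v)"
    by (metis norm_triangle_sub add.commute)
  then have taylor: "cmod (poly q z - poly q v - poly (pderiv q) v * (z - v)) \<le> ?K * cmod (z - v) ^ 2"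
    using assms by (intro norm_poly_taylor_le) auto
  have "cmod (poly q z - poly q v)
      \<le> cmod (poly (pderiv q) v * (z - v)) + cmod (poly q z - poly q v - poly (pderiv q) v * (z - v))"
    by (rule norm_triangle_sub)
  also have "\<dots> \<le> cmod (poly (pderiv q) v) * cmod (z - v) + ?K * cmod (z - v) ^ 2"
    using taylor by (simp add: norm_mult)
  also have "\<dots> = (cmod (poly (pderiv q) v) + ?K * cmod (z - v)) * cmod (z - v)"
    by (simp add: algebra_simps power2_eq_square)
  finally show ?thesis .
qed

section \<open>Contraction along orbits\<close>

lemma prod_lessThan_add:
  fixes c :: "nat \<Rightarrow> 'a::comm_monoid_mult"
  shows "(\<Prod>j<N + M. c (i + j)) = (\<Prod>j<N. c (i + j)) * (\<Prod>j<M. c (i + N + j))"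
  by (induction M) (simp_all add: ac_simps)

lemma prod_le_block_bound:
  fixes c :: "nat \<Rightarrow> real"
  assumes nonneg: "\<And>j. 0 \<le> c j" and le_A: "\<And>j. c j \<le> A" and "1 \<le> A" and "N > 0"
    and block: "\<And>i. (\<Prod>j<N. c (i + j)) \<le> \<mu>"
  shows "(\<Prod>j<k. c j) \<le> \<mu> ^ (k div N) * A ^ N"
proof -
  have "0 \<le> \<mu>"
    using block[of 0] prod_nonneg[of "{..<N}" "\<lambda>j. c j"] nonneg by force
  have blocks: "(\<Prod>j<q * N + r. c (i + j)) \<le> \<mu> ^ q * A ^ r" for q r i
  proof (induction q arbitrary: i)
    case 0
    have "(\<Prod>j<r. c (i + j)) \<le> (\<Prod>j<r. A)"
      using nonneg le_A by (intro prod_mono) auto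
    then show ?case by simp
  next
    case (Suc q)
    have "(\<Prod>j<Suc q * N + r. c (i + j)) = (\<Prod>j<N. c (i + j)) * (\<Prod>j<q * N + r. c (i + N + j))"
      using prod_lessThan_add[of c i N "q * N + r"] by (simp add: add.assoc)
    also have "\<dots> \<le> \<mu> * (\<mu> ^ q * A ^ r)"
      using Suc.IH[of "i + N"] block[of i] nonneg \<open>0 \<le> \<mu>\<close>
      by (intro mult_mono prod_nonneg) auto
    finally show ?case by simp
  qed
  have "(\<Prod>j<k. c j) \<le> \<mu> ^ (k div N) * A ^ (k mod N)"
    using blocks[where q="k div N" and r="k mod N" and i=0] by simp
  also have "\<dots> \<le> \<mu> ^ (k div N) * A ^ N"
    using \<open>1 \<le> A\<close> \<open>N > 0\<close> \<open>0 \<le> \<mu>\<close> by (intro mult_left_mono power_increasing) auto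
  finally show ?thesis .
qed

lemma tendsto_zero_if_le_power_div:
  fixes d :: "nat \<Rightarrow> real"
  assumes "\<And>k. 0 \<le> d k" "\<And>k. d k \<le> \<mu> ^ (k div N) * K" "0 \<le> \<mu>" "\<mu> < 1" "N > 0"
  shows "d \<longlonglongrightarrow> 0"
proof -
  have "(\<lambda>q. \<mu> ^ q) \<longlonglongrightarrow> 0"
    using assms(3,4) by (intro LIMSEQ_power_zero) auto
  then have "(\<lambda>k. \<mu> ^ (k div N)) \<longlonglongrightarrow> 0"
    by (rule filterlim_compose) (rule filterlim_at_top_div_const_nat[OF assms(5)])
  then have lim: "(\<lambda>k. \<mu> ^ (k div N) * K) \<longlonglongrightarrow> 0"
    by (simp add: tendsto_mult_left_zero)
  show ?thesis
    by (rule tendsto_sandwich[OF _ _ tendsto_const lim]) (simp_all add: assms(1,2))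
qed

lemma tendsto_zero_if_block_contracting:
  fixes c d :: "nat \<Rightarrow> real"
  assumes c: "\<And>j. 0 \<le> c j" "\<And>j. c j \<le> A" "1 \<le> A" "N > 0"
    and block: "\<And>i. (\<Prod>j<N. c (i + j)) \<le> \<mu>" and "\<mu> < 1"
    and d_nonneg: "\<And>k. 0 \<le> d k" and start: "d 0 \<le> \<delta> / A ^ N"
    and step: "\<And>k. d k \<le> \<delta> \<Longrightarrow> d (Suc k) \<le> c k * d k"
  shows "d \<longlonglongrightarrow> 0"
proof -
  have prod_bound: "(\<Prod>j<k. c j) \<le> \<mu> ^ (k div N) * A ^ N" for k
    by (rule prod_le_block_bound[OF c block])
  have "0 \<le> \<mu>"
    using block[of 0] prod_nonneg[of "{..<N}" c] c(1) by force
  have prod_le: "(\<Prod>j<k. c j) \<le> A ^ N" for k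
  proof -
    have "\<mu> ^ (k div N) * A ^ N \<le> 1 * A ^ N"
      using \<open>0 \<le> \<mu>\<close> \<open>\<mu> < 1\<close> c(3) by (intro mult_right_mono power_le_one) auto
    then show ?thesis
      using prod_bound[of k] by simp
  qed
  \<comment> \<open>The orbit never leaves the \<open>\<delta>\<close>-neighbourhood, because \<open>A ^ N\<close> bounds all partial products.\<close>
  have d_le: "d k \<le> (\<Prod>j<k. c j) * d 0" for k
  proof (induction k)
    case 0
    then show ?case by simp
  next
    case (Suc k)
    have "(\<Prod>j<k. c j) * d 0 \<le> A ^ N * (\<delta> / A ^ N)"
      using prod_le[of k] start d_nonneg[of 0] c(1) c(3)
      by (intro mult_mono prod_nonneg) auto
    then have "d k \<le> \<delta>"
      using Suc.IH c(3) by simp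
    then have "d (Suc k) \<le> c k * d k"
      by (rule step)
    also have "\<dots> \<le> c k * ((\<Prod>j<k. c j) * d 0)"
      using Suc.IH c(1) by (intro mult_left_mono) auto
    finally show ?case
      by (simp add: ac_simps)
  qed
  show ?thesis
  proof (rule tendsto_zero_if_le_power_div[OF d_nonneg _ \<open>0 \<le> \<mu>\<close> \<open>\<mu> < 1\<close> c(4)])
    show "d k \<le> \<mu> ^ (k div N) * (A ^ N * d 0)" for k
      using order_trans[OF d_le[of k] mult_right_mono[OF prod_bound d_nonneg[of 0]]]
      by (simp add: mult.assoc)
  qed
qed

lemma block_product_contraction:
  fixes a :: "real \<Rightarrow> real"
  assumes cont: "continuous_on UNIV a" and per: "\<And>t. a (t + 1) = a t" and nonneg: "\<And>t. 0 \<le> a t"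
    and int: "integrable (lebesgue_on {0..1}) (\<lambda>t. ln (a t))"
    and neg: "integral\<^sup>L (lebesgue_on {0..1}) (\<lambda>t. ln (a t)) < 0"
    and irr: "\<beta> \<notin> \<rat>" and "e > 0"
  obtains \<epsilon> N \<mu> where "0 < \<epsilon>" "\<epsilon> \<le> e" "N > 0" "\<mu> < 1"
    "\<And>t. (\<Prod>j<N. a (t + real j * \<beta>) + \<epsilon>) \<le> \<mu>"
proof -
  have "\<forall>\<^sub>F \<epsilon> in at_right 0. integral {0..1} (\<lambda>t. ln (a t + \<epsilon>)) < 0"
    using eventually_integral_ln_add_neg[OF continuous_on_subset[OF cont] nonneg int neg] by simp
  then obtain b where "b > 0" and b: "\<And>\<epsilon>. 0 < \<epsilon> \<Longrightarrow> \<epsilon> < b \<Longrightarrow> integral {0..1} (\<lambda>t. ln (a t + \<epsilon>)) < 0"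
    by (auto simp: eventually_at_right_field)
  define \<epsilon> where "\<epsilon> = min (b / 2) e"
  have \<epsilon>: "0 < \<epsilon>" "\<epsilon> \<le> e"
    using \<open>b > 0\<close> \<open>e > 0\<close> by (simp_all add: \<epsilon>_def)
  define I where "I = integral {0..1} (\<lambda>t. ln (a t + \<epsilon>))"
  have "I < 0"
    unfolding I_def using \<epsilon> \<open>b > 0\<close> by (intro b) (auto simp: \<epsilon>_def)
  have pos: "a t + \<epsilon> > 0" for t
    using nonneg[of t] \<epsilon>(1) by linarith
  have "continuous_on UNIV (\<lambda>t. ln (a t + \<epsilon>))"
    using pos by (intro continuous_intros cont) (auto simp: less_imp_neq[symmetric])
  then obtain N where "N > 0" and N: "\<And>\<theta>. (\<Sum>j<N. ln (a (\<theta> + real j * \<beta>) + \<epsilon>)) \<le> real N * (I + - I / 2)"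
    using birkhoff_sum_le[of "\<lambda>t. ln (a t + \<epsilon>)" \<beta> "- I / 2"] per irr \<open>I < 0\<close> unfolding I_def by auto
  define \<mu> where "\<mu> = exp (real N * (I / 2))"
  have "\<mu> < 1"
    using \<open>N > 0\<close> \<open>I < 0\<close> by (simp add: \<mu>_def mult_pos_neg)
  have "(\<Prod>j<N. a (t + real j * \<beta>) + \<epsilon>) \<le> \<mu>" for t
  proof -
    have "(\<Prod>j<N. a (t + real j * \<beta>) + \<epsilon>) = exp (\<Sum>j<N. ln (a (t + real j * \<beta>) + \<epsilon>))"
      using pos by (simp add: exp_sum)
    also have "\<dots> \<le> \<mu>"
      using N[of t] by (simp add: \<mu>_def)
    finally show ?thesis .
  qed
  with \<epsilon> \<open>N > 0\<close> \<open>\<mu> < 1\<close> show ?thesis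
    using that by blast
qed

section \<open>Basins of attraction\<close>

lemma continuous_on_funpow:
  fixes f :: "'a::topological_space \<Rightarrow> 'a"
  assumes "continuous_on UNIV f"
  shows "continuous_on UNIV (f ^^ k)"
proof (induction k)
  case 0
  show ?case
    by (simp add: continuous_on_id')
next
  case (Suc k)
  then show ?case
    using continuous_on_compose[OF Suc continuous_on_subset[OF assms]] by simp
qed

lemma open_basin_if_neighbourhood_attracted:
  fixes F :: "'a::metric_space \<Rightarrow> 'a"
  assumes cont: "continuous_on UNIV F" and "\<epsilon> > 0"
    and near: "\<And>w. infdist w S < \<epsilon> \<Longrightarrow> (\<lambda>k. infdist ((F ^^ k) w) S) \<longlonglongrightarrow> 0"
  shows "open {w. (\<lambda>k. infdist ((F ^^ k) w) S) \<longlonglongrightarrow> 0}"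
proof -
  have "{w. (\<lambda>k. infdist ((F ^^ k) w) S) \<longlonglongrightarrow> 0} = (\<Union>k. (\<lambda>w. infdist ((F ^^ k) w) S) -` {..<\<epsilon>})"
  proof (intro set_eqI iffI)
    fix w assume "w \<in> {w. (\<lambda>k. infdist ((F ^^ k) w) S) \<longlonglongrightarrow> 0}"
    then have "\<forall>\<^sub>F k in sequentially. infdist ((F ^^ k) w) S < \<epsilon>"
      using \<open>\<epsilon> > 0\<close> by (auto dest: order_tendstoD)
    then show "w \<in> (\<Union>k. (\<lambda>w. infdist ((F ^^ k) w) S) -` {..<\<epsilon>})"
      by (auto simp: eventually_sequentially)
  next
    fix w assume "w \<in> (\<Union>k. (\<lambda>w. infdist ((F ^^ k) w) S) -` {..<\<epsilon>})"
    then obtain k where "infdist ((F ^^ k) w) S < \<epsilon>"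
      by blast
    then have "(\<lambda>j. infdist ((F ^^ j) ((F ^^ k) w)) S) \<longlonglongrightarrow> 0"
      by (rule near)
    then have "(\<lambda>j. infdist ((F ^^ (j + k)) w) S) \<longlonglongrightarrow> 0"
      by (simp add: funpow_add)
    then show "w \<in> {w. (\<lambda>k. infdist ((F ^^ k) w) S) \<longlonglongrightarrow> 0}"
      by (simp add: LIMSEQ_offset)
  qed
  moreover have "open ((\<lambda>w. infdist ((F ^^ k) w) S) -` {..<\<epsilon>})" for k
    by (intro open_vimage open_lessThan continuous_on_infdist continuous_on_funpow cont)
  ultimately show ?thesis
    by auto
qed

section \<open>Dynamics near an invariant multi-curve\<close>

lemma fst_fibred_map_funpow:
  "fst ((fibred_map \<alpha> p ^^ k) w) = fst w + real k * \<alpha>"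
  by (induction k) (simp_all add: fibred_map_def case_prod_beta algebra_simps)

lemma snd_fibred_map_funpow_Suc:
  "snd ((fibred_map \<alpha> p ^^ Suc k) w) = poly (p (fst w + real k * \<alpha>)) (snd ((fibred_map \<alpha> p ^^ k) w))"
proof -
  have "snd ((fibred_map \<alpha> p ^^ Suc k) w)
      = poly (p (fst ((fibred_map \<alpha> p ^^ k) w))) (snd ((fibred_map \<alpha> p ^^ k) w))"
    by (simp add: fibred_map_def case_prod_beta)
  then show ?thesis
    by (simp only: fst_fibred_map_funpow)
qed

lemma continuous_on_fibred_map:
  assumes "fibred_poly_dyn \<alpha> p"
  shows "continuous_on UNIV (fibred_map \<alpha> p)"
proof -
  obtain d where "\<And>k. continuous_on UNIV (\<lambda>\<theta>. coeff (p \<theta>) k)" "\<And>\<theta>. degree (p \<theta>) \<le> d"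
    using assms unfolding fibred_poly_dyn_def by blast
  then have poly_cont: "continuous_on UNIV (\<lambda>w. poly (p (fst w)) (snd w))"
    by (rule continuous_on_poly_family)
  have "fibred_map \<alpha> p = (\<lambda>w. (fst w + \<alpha>, poly (p (fst w)) (snd w)))"
    by (auto simp: fibred_map_def case_prod_beta)
  then show ?thesis
    by (simp only:) (intro continuous_on_Pair continuous_intros poly_cont)
qed

locale invariant_multicurve =
  fixes \<alpha> :: real and p :: "real \<Rightarrow> complex poly" and n :: nat
    and \<gamma> :: "real \<Rightarrow> complex" and \<tau> :: nat
  assumes dyn: "fibred_poly_dyn \<alpha> p" and n_pos: "n > 0"
    and \<gamma>_cont: "continuous_on UNIV \<gamma>" and \<gamma>_periodic: "\<And>\<theta>. \<gamma> (\<theta> + 1) = \<gamma> \<theta>"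
    and invariant: "\<And>\<theta>. poly (p (frac (real n * \<theta>))) (\<gamma> \<theta>) = \<gamma> (\<theta> + (\<alpha> + real \<tau>) / real n)"
begin

definition param_rotation :: real where
  "param_rotation = (\<alpha> + real \<tau>) / real n"

definition multiplier :: "real \<Rightarrow> real" where
  "multiplier \<theta> = cmod (poly (pderiv (p (frac (real n * \<theta>)))) (\<gamma> \<theta>))"

lemma multiplier_nonneg: "0 \<le> multiplier \<theta>"
  by (simp add: multiplier_def)

lemma p_periodic: "p (\<theta> + 1) = p \<theta>"
  using dyn by (simp add: fibred_poly_dyn_def)

lemma p_frac: "p (frac x) = p x"
  using periodic_frac[of p] p_periodic by blast

lemma p_coeff_continuous: "continuous_on UNIV (\<lambda>\<theta>. coeff (p \<theta>) k)"
  using dyn by (simp add: fibred_poly_dyn_def)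

lemma p_degree_bounded: obtains d where "\<And>\<theta>. degree (p \<theta>) \<le> d"
  using dyn unfolding fibred_poly_dyn_def by blast

lemma param_rotation_irrational: "param_rotation \<notin> \<rat>"
proof
  assume "param_rotation \<in> \<rat>"
  then have "real n * param_rotation - real \<tau> \<in> \<rat>"
    by (intro Rats_diff Rats_mult) auto
  then show False
    using dyn n_pos by (simp add: param_rotation_def fibred_poly_dyn_def)
qed

lemma curve_step: "poly (p (real n * \<theta>)) (\<gamma> \<theta>) = \<gamma> (\<theta> + param_rotation)"
  using invariant[of \<theta>] by (simp add: p_frac param_rotation_def)

lemma lift_orbit_Ints:
  assumes "x - real n * \<theta> \<in> \<int>"
  shows "x + real k * \<alpha> - real n * (\<theta> + real k * param_rotation) \<in> \<int>"
proof -
  have "real n * param_rotation = \<alpha> + real \<tau>"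
    using n_pos by (simp add: param_rotation_def)
  then have "x + real k * \<alpha> - real n * (\<theta> + real k * param_rotation) = (x - real n * \<theta>) - of_nat (k * \<tau>)"
    by (simp add: algebra_simps flip: mult.assoc)
  also have "\<dots> \<in> \<int>"
    by (rule Ints_diff[OF assms Ints_of_nat])
  finally show ?thesis .
qed

lemma p_lift:
  assumes "x - real n * \<theta> \<in> \<int>"
  shows "p x = p (real n * \<theta>)"
proof -
  obtain m where "x = real n * \<theta> + of_int m"
    using assms by (metis Ints_cases add_diff_cancel_left' diff_add_cancel)
  then show ?thesis
    using periodic_plus_of_int[of p, OF p_periodic] by simp
qed

lemma multiplier_continuous: "continuous_on UNIV multiplier"
proof -
  obtain d where deg: "\<And>\<theta>. degree (p \<theta>) \<le> d"
    using p_degree_bounded by blast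
  have "continuous_on UNIV (\<lambda>w. poly (pderiv (p (fst w))) (snd w))"
  proof (rule continuous_on_poly_family)
    show "continuous_on UNIV (\<lambda>\<theta>. coeff (pderiv (p \<theta>)) k)" for k
      unfolding coeff_pderiv by (intro continuous_intros p_coeff_continuous)
    show "degree (pderiv (p \<theta>)) \<le> d" for \<theta>
      using deg[of \<theta>] by (simp add: degree_pderiv)
  qed
  from continuous_on_compose2[OF this, of UNIV "\<lambda>\<theta>. (real n * \<theta>, \<gamma> \<theta>)"]
  have "continuous_on UNIV (\<lambda>\<theta>. poly (pderiv (p (real n * \<theta>))) (\<gamma> \<theta>))"
    by (simp add: continuous_on_Pair continuous_intros \<gamma>_cont)
  then have "continuous_on UNIV (\<lambda>\<theta>. cmod (poly (pderiv (p (real n * \<theta>))) (\<gamma> \<theta>)))"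
    by (rule continuous_on_norm)
  then show ?thesis
    by (simp add: multiplier_def p_frac)
qed

lemma multiplier_periodic: "multiplier (\<theta> + 1) = multiplier \<theta>"
proof -
  have "p (real n * (\<theta> + 1)) = p (real n * \<theta>)"
    using p_lift[of "real n * (\<theta> + 1)" \<theta>] by (simp add: algebra_simps)
  then show ?thesis
    by (simp add: multiplier_def p_frac \<gamma>_periodic)
qed

lemma coeff_bounded: obtains B where "\<And>\<theta> i. cmod (coeff (p \<theta>) i) \<le> B"
proof -
  obtain d where deg: "\<And>\<theta>. degree (p \<theta>) \<le> d"
    using p_degree_bounded by blast
  define S where "S \<theta> = (\<Sum>i\<le>d. cmod (coeff (p \<theta>) i))" for \<theta>
  have "continuous_on UNIV S"
    unfolding S_def by (intro continuous_intros p_coeff_continuous)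
  moreover have "S (\<theta> + 1) = S \<theta>" for \<theta>
    by (simp add: S_def p_periodic)
  ultimately obtain B where B: "\<And>\<theta>. norm (S \<theta>) \<le> B"
    using bounded_range_periodic[of S] by (auto simp: bounded_iff)
  have "cmod (coeff (p \<theta>) i) \<le> B" for \<theta> i
  proof (cases "i \<le> d")
    case True
    then have "cmod (coeff (p \<theta>) i) \<le> S \<theta>"
      unfolding S_def by (intro member_le_sum) auto
    then show ?thesis
      using B[of \<theta>] by simp
  next
    case False
    then have "coeff (p \<theta>) i = 0"
      using deg[of \<theta>] by (intro coeff_eq_0) simp
    then show ?thesis
      using B[of \<theta>] by (simp add: order_trans[OF norm_ge_zero])
  qed
  then show ?thesis
    using that by blast
qed

lemma linearisation:
  obtains C where "C > 0" "\<And>\<theta> z. cmod (z - \<gamma> \<theta>) \<le> 1 \<Longrightarrow>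
    cmod (poly (p (real n * \<theta>)) z - \<gamma> (\<theta> + param_rotation))
      \<le> (multiplier \<theta> + C * cmod (z - \<gamma> \<theta>)) * cmod (z - \<gamma> \<theta>)"
proof -
  obtain d where deg: "\<And>\<theta>. degree (p \<theta>) \<le> d"
    using p_degree_bounded by blast
  obtain B where B: "\<And>\<theta> i. cmod (coeff (p \<theta>) i) \<le> B"
    using coeff_bounded by blast
  obtain R where R: "\<And>\<theta>. cmod (\<gamma> \<theta>) \<le> R"
    using bounded_range_periodic[OF \<gamma>_cont \<gamma>_periodic] by (auto simp: bounded_iff)
  have "0 \<le> B" "0 \<le> R"
    using B[of 0 0] R[of 0] by (meson norm_ge_zero order_trans)+
  define C where "C = (\<Sum>i\<le>d. B * real i ^ 2 * (R + 1) ^ i) + 1"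
  have "C > 0"
    unfolding C_def using \<open>0 \<le> B\<close> \<open>0 \<le> R\<close> by (simp add: add_nonneg_pos sum_nonneg)
  moreover have "cmod (poly (p (real n * \<theta>)) z - \<gamma> (\<theta> + param_rotation))
      \<le> (multiplier \<theta> + C * cmod (z - \<gamma> \<theta>)) * cmod (z - \<gamma> \<theta>)"
    if "cmod (z - \<gamma> \<theta>) \<le> 1" for \<theta> z
  proof -
    have "cmod (poly (p (real n * \<theta>)) z - poly (p (real n * \<theta>)) (\<gamma> \<theta>))
        \<le> (multiplier \<theta> + (C - 1) * cmod (z - \<gamma> \<theta>)) * cmod (z - \<gamma> \<theta>)"
      using norm_poly_diff_le[OF deg B \<open>0 \<le> R\<close> R that] by (simp add: C_def multiplier_def p_frac)
    also have "\<dots> \<le> (multiplier \<theta> + C * cmod (z - \<gamma> \<theta>)) * cmod (z - \<gamma> \<theta>)"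
      by (simp add: mult_right_mono algebra_simps)
    finally show ?thesis
      by (simp add: curve_step)
  qed
  ultimately show ?thesis
    using that by blast
qed

lemma snd_orbit_Suc:
  assumes "x - real n * \<theta> \<in> \<int>"
  shows "snd ((fibred_map \<alpha> p ^^ Suc k) (x, z))
    = poly (p (real n * (\<theta> + real k * param_rotation))) (snd ((fibred_map \<alpha> p ^^ k) (x, z)))"
  using snd_fibred_map_funpow_Suc p_lift[OF lift_orbit_Ints[OF assms]] by simp

lemma infdist_orbit_le:
  assumes "x - real n * \<theta> \<in> \<int>"
  shows "infdist ((fibred_map \<alpha> p ^^ k) (x, z)) (ncurve_lift n \<gamma>)
    \<le> cmod (snd ((fibred_map \<alpha> p ^^ k) (x, z)) - \<gamma> (\<theta> + real k * param_rotation))"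
proof -
  obtain x' z' where w: "(fibred_map \<alpha> p ^^ k) (x, z) = (x', z')"
    by fastforce
  then have "x' = x + real k * \<alpha>"
    using fst_fibred_map_funpow[where w = "(x, z)" and k = k and \<alpha> = \<alpha> and p = p] by simp
  moreover have "(x + real k * \<alpha>, \<gamma> (\<theta> + real k * param_rotation)) \<in> ncurve_lift n \<gamma>"
    using lift_orbit_Ints[OF assms] unfolding ncurve_lift_def by blast
  then have "infdist (x', z') (ncurve_lift n \<gamma>) \<le> dist (x', z') (x', \<gamma> (\<theta> + real k * param_rotation))"
    using \<open>x' = x + real k * \<alpha>\<close> by (intro infdist_le) simp
  then show ?thesis
    using w by (simp add: dist_Pair_Pair dist_norm)
qed

lemma mem_basin_if_contracting:
  assumes lift: "x - real n * \<theta> \<in> \<int>"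
    and lin: "\<And>\<theta> z. cmod (z - \<gamma> \<theta>) \<le> 1 \<Longrightarrow>
      cmod (poly (p (real n * \<theta>)) z - \<gamma> (\<theta> + param_rotation))
        \<le> (multiplier \<theta> + C * cmod (z - \<gamma> \<theta>)) * cmod (z - \<gamma> \<theta>)"
    and "0 \<le> C" "0 < \<delta>" "\<delta> \<le> 1" "1 \<le> A" "N > 0" "\<mu> < 1"
    and bound: "\<And>t. multiplier t + C * \<delta> \<le> A"
    and block: "\<And>t. (\<Prod>j<N. multiplier (t + real j * param_rotation) + C * \<delta>) \<le> \<mu>"
    and close: "cmod (z - \<gamma> \<theta>) \<le> \<delta> / A ^ N"
  shows "(x, z) \<in> basin \<alpha> p (ncurve_lift n \<gamma>)"
proof -
  let ?\<beta> = param_rotation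
  define d where "d k = cmod (snd ((fibred_map \<alpha> p ^^ k) (x, z)) - \<gamma> (\<theta> + real k * ?\<beta>))" for k
  define c where "c k = multiplier (\<theta> + real k * ?\<beta>) + C * \<delta>" for k
  have lim: "d \<longlonglongrightarrow> 0"
  proof (rule tendsto_zero_if_block_contracting)
    show "0 \<le> c j" "c j \<le> A" for j
      using bound multiplier_nonneg \<open>0 \<le> C\<close> \<open>0 < \<delta>\<close> by (simp_all add: c_def)
    show "(\<Prod>j<N. c (i + j)) \<le> \<mu>" for i
      using block[of "\<theta> + real i * ?\<beta>"] by (simp add: c_def algebra_simps)
    show "d (Suc k) \<le> c k * d k" if "d k \<le> \<delta>" for k
    proof -
      let ?z = "snd ((fibred_map \<alpha> p ^^ k) (x, z))" and ?\<theta> = "\<theta> + real k * ?\<beta>"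
      have "d (Suc k) = cmod (poly (p (real n * ?\<theta>)) ?z - \<gamma> (?\<theta> + ?\<beta>))"
        unfolding d_def snd_orbit_Suc[OF lift] by (simp add: algebra_simps)
      also have "\<dots> \<le> (multiplier ?\<theta> + C * d k) * d k"
        unfolding d_def by (rule lin) (use that \<open>\<delta> \<le> 1\<close> in \<open>simp add: d_def\<close>)
      also have "\<dots> \<le> c k * d k"
        using that \<open>0 \<le> C\<close> by (auto simp: c_def d_def intro!: mult_right_mono mult_left_mono)
      finally show ?thesis .
    qed
  qed (use close \<open>1 \<le> A\<close> \<open>N > 0\<close> \<open>\<mu> < 1\<close> in \<open>simp_all add: d_def\<close>)
  show ?thesis
    unfolding basin_def mem_Collect_eq
    by (rule tendsto_sandwich[OF _ _ tendsto_const lim])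
      (simp_all add: d_def infdist_nonneg infdist_orbit_le[OF lift])
qed

lemma tube_in_basin:
  assumes "attracting_ncurve p n \<gamma>"
  obtains \<eta> where "\<eta> > 0"
    "\<And>x \<theta> z. x - real n * \<theta> \<in> \<int> \<Longrightarrow> cmod (z - \<gamma> \<theta>) \<le> \<eta> \<Longrightarrow> (x, z) \<in> basin \<alpha> p (ncurve_lift n \<gamma>)"
proof -
  obtain C where "C > 0" and lin: "\<And>\<theta> z. cmod (z - \<gamma> \<theta>) \<le> 1 \<Longrightarrow>
    cmod (poly (p (real n * \<theta>)) z - \<gamma> (\<theta> + param_rotation))
      \<le> (multiplier \<theta> + C * cmod (z - \<gamma> \<theta>)) * cmod (z - \<gamma> \<theta>)"
    using linearisation by blast
  have "integrable (lebesgue_on {0..1}) (\<lambda>\<theta>. ln (multiplier \<theta>))"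
    and "integral\<^sup>L (lebesgue_on {0..1}) (\<lambda>\<theta>. ln (multiplier \<theta>)) < 0"
    using assms by (simp_all add: attracting_ncurve_def multiplier_def Let_def)
  then obtain \<epsilon> N \<mu> where \<epsilon>: "0 < \<epsilon>" "\<epsilon> \<le> C" and "N > 0" "\<mu> < 1"
    and block: "\<And>t. (\<Prod>j<N. multiplier (t + real j * param_rotation) + \<epsilon>) \<le> \<mu>"
    using block_product_contraction[OF multiplier_continuous multiplier_periodic multiplier_nonneg _ _
        param_rotation_irrational \<open>C > 0\<close>]
    by blast
  obtain M where M: "\<And>\<theta>. \<bar>multiplier \<theta>\<bar> \<le> M"
    using bounded_range_periodic[OF multiplier_continuous multiplier_periodic] by (auto simp: bounded_iff)
  define \<delta> where "\<delta> = \<epsilon> / C"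
  define A where "A = max 1 (M + \<epsilon>)"
  have \<delta>: "0 < \<delta>" "\<delta> \<le> 1" "C * \<delta> = \<epsilon>"
    using \<epsilon> \<open>C > 0\<close> by (simp_all add: \<delta>_def)
  show ?thesis
  proof (rule that[of "\<delta> / A ^ N"])
    show "\<delta> / A ^ N > 0"
      using \<delta> by (simp add: A_def)
    show "(x, z) \<in> basin \<alpha> p (ncurve_lift n \<gamma>)"
      if "x - real n * \<theta> \<in> \<int>" "cmod (z - \<gamma> \<theta>) \<le> \<delta> / A ^ N" for x \<theta> z
    proof (rule mem_basin_if_contracting[OF that(1) lin _ \<delta>(1,2) _ \<open>N > 0\<close> \<open>\<mu> < 1\<close> _ _ that(2)])
      show "multiplier t + C * \<delta> \<le> A" for t
        using M[of t] \<delta>(3) by (simp add: A_def)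
    qed (use \<open>C > 0\<close> block \<delta>(3) in \<open>simp_all add: A_def\<close>)
  qed
qed

lemma near_curve_obtain_param:
  assumes uc: "\<And>s t. dist s t < \<rho> \<Longrightarrow> dist (\<gamma> s) (\<gamma> t) < \<eta> / 2"
    and near: "infdist (x, z) (ncurve_lift n \<gamma>) < \<epsilon>" and \<epsilon>: "\<epsilon> \<le> \<eta> / 2" "\<epsilon> \<le> real n * \<rho>"
  obtains \<theta> where "x - real n * \<theta> \<in> \<int>" "cmod (z - \<gamma> \<theta>) \<le> \<eta>"
proof -
  have "(0, \<gamma> 0) \<in> ncurve_lift n \<gamma>"
    unfolding ncurve_lift_def by force
  then have "ncurve_lift n \<gamma> \<noteq> {}"
    by blast
  then obtain y where "y \<in> ncurve_lift n \<gamma>" and y: "dist (x, z) y < \<epsilon>"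
    using near by (auto simp: infdist_notempty cINF_less_iff)
  then obtain x' \<theta>' where y_eq: "y = (x', \<gamma> \<theta>')" and lift: "x' - real n * \<theta>' \<in> \<int>"
    unfolding ncurve_lift_def by blast
  define \<theta> where "\<theta> = \<theta>' + (x - x') / real n"
  have "x - real n * \<theta> = x' - real n * \<theta>'"
    using n_pos by (simp add: \<theta>_def field_simps)
  then have "x - real n * \<theta> \<in> \<int>"
    using lift by simp
  moreover have "\<bar>x - x'\<bar> < real n * \<rho>" "cmod (z - \<gamma> \<theta>') < \<eta> / 2"
    using dist_fst_le[of "(x, z)" y] dist_snd_le[of "(x, z)" y] y \<epsilon>
    by (auto simp: y_eq dist_real_def dist_norm)
  then have "dist (\<gamma> \<theta>') (\<gamma> \<theta>) < \<eta> / 2"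
    using n_pos by (intro uc) (simp add: \<theta>_def dist_real_def field_simps)
  then have "cmod (z - \<gamma> \<theta>) \<le> \<eta>"
    using \<open>cmod (z - \<gamma> \<theta>') < \<eta> / 2\<close> norm_triangle_ineq[of "z - \<gamma> \<theta>'" "\<gamma> \<theta>' - \<gamma> \<theta>"]
    by (simp add: dist_norm)
  ultimately show ?thesis
    by (rule that)
qed

lemma neighbourhood_in_basin:
  assumes "attracting_ncurve p n \<gamma>"
  obtains \<epsilon> where "\<epsilon> > 0"
    "\<And>w. infdist w (ncurve_lift n \<gamma>) < \<epsilon> \<Longrightarrow> w \<in> basin \<alpha> p (ncurve_lift n \<gamma>)"
proof -
  obtain \<eta> where "\<eta> > 0" and tube: "\<And>x \<theta> z. x - real n * \<theta> \<in> \<int> \<Longrightarrow> cmod (z - \<gamma> \<theta>) \<le> \<eta> \<Longrightarrow>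
      (x, z) \<in> basin \<alpha> p (ncurve_lift n \<gamma>)"
    using tube_in_basin[OF assms] by blast
  obtain \<rho> where "\<rho> > 0" and uc: "\<And>s t. dist s t < \<rho> \<Longrightarrow> dist (\<gamma> s) (\<gamma> t) < \<eta> / 2"
    using uniformly_continuous_periodic[OF \<gamma>_cont \<gamma>_periodic] \<open>\<eta> > 0\<close>
    unfolding uniformly_continuous_on_def by (metis half_gt_zero UNIV_I)
  show ?thesis
  proof (rule that)
    show "min (\<eta> / 2) (real n * \<rho>) > 0"
      using \<open>\<eta> > 0\<close> \<open>\<rho> > 0\<close> n_pos by simp
    show "w \<in> basin \<alpha> p (ncurve_lift n \<gamma>)"
      if near: "infdist w (ncurve_lift n \<gamma>) < min (\<eta> / 2) (real n * \<rho>)" for w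
    proof -
      obtain x z where w: "w = (x, z)"
        by fastforce
      obtain \<theta> where "x - real n * \<theta> \<in> \<int>" "cmod (z - \<gamma> \<theta>) \<le> \<eta>"
        by (rule near_curve_obtain_param[where \<rho> = \<rho> and \<eta> = \<eta> and \<epsilon> = "min (\<eta> / 2) (real n * \<rho>)"])
          (use uc near w in auto)
      then show ?thesis
        unfolding w by (rule tube)
    qed
  qed
qed

end

theorem mainTheorem5:
  fixes \<alpha> :: real and p :: "real \<Rightarrow> complex poly" and n :: nat and \<gamma> :: "real \<Rightarrow> complex"
  assumes "fibred_poly_dyn \<alpha> p"
    and "n \<ge> 1"
    and "circle_embedding \<gamma>"
    and "invariant_ncurve p \<alpha> n \<gamma>"
    and "attracting_ncurve p n \<gamma>"
  shows "open (basin \<alpha> p (ncurve_lift n \<gamma>))"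
proof -
  obtain \<tau> where "\<And>\<theta>. poly (p (frac (real n * \<theta>))) (\<gamma> \<theta>) = \<gamma> (\<theta> + (\<alpha> + real \<tau>) / real n)"
    using assms(4) unfolding invariant_ncurve_def by blast
  then interpret invariant_multicurve \<alpha> p n \<gamma> \<tau>
    using assms(1-3) by unfold_locales (auto simp: circle_embedding_def)
  obtain \<epsilon> where "\<epsilon> > 0"
    and near: "\<And>w. infdist w (ncurve_lift n \<gamma>) < \<epsilon> \<Longrightarrow> w \<in> basin \<alpha> p (ncurve_lift n \<gamma>)"
    using neighbourhood_in_basin[OF assms(5)] by blast
  show ?thesis
    unfolding basin_def
    by (rule open_basin_if_neighbourhood_attracted[OF continuous_on_fibred_map[OF assms(1)] \<open>\<epsilon> > 0\<close>])
      (use near in \<open>simp add: basin_def\<close>)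
qed

end
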